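(* Let $(\Omega,d)$ be a compact metric space, $J \subset \mathbb{R}$ an open interval and $\pi_\lambda \colon \Omega \to \mathbb{R}$, $\lambda \in J$, continuous maps, smooth in $\lambda$, satisfying transversality and regularity of order $\tau \in [0,1)$ (defined below). Fix $x,y \in \Omega$ with $x \neq y$, write $r = d(x,y)$ and $\Phi_\lambda = \Phi_\lambda(x,y)$, and let $I$ be a compact subinterval of $J$. The set $\{\lambda \in \operatorname{int} I : |\Phi_{\lambda}| < \delta_{I,\tau}r^{\tau}\}$ can be written as a countable union of disjoint maximal open intervals $I_{1},I_{2},\ldots \subset I$, and: (i) $\mathcal{L}^{1}(I_{j}) \leq 2$ for all $j$; furthermore, if $I_{j}$ and $I$ have no common boundary point, then $r^{2\tau} \lesssim_{I,\tau} \mathcal{L}^{1}(I_{j})$. Consequently there are only finitely many intervals $I_{j}$. (ii) There exist points $\lambda_{j} \in \bar{I}_{j}$ such that for all $\lambda \in \bar{I}_{j}$, $|\Phi_{\lambda}| \geq |\Phi_{\lambda_{j}}|$ and $|\Phi_{\lambda}| \geq \delta_{I,\tau}r^{\tau}|\lambda - \lambda_{j}|$. Furthermore, there exists a constant $\varepsilon > 0$, depending only on $I$ and $\tau$ (and the family), such that: (a) if $\lambda \in I_{j}$ and $|\Phi_{\lambda}| \leq \delta_{I,\tau}r^{\tau}/2$, then $(\lambda - \varepsilon r^{2\tau},\lambda + \varepsilon r^{2\tau}) \cap I \subset I_{j}$; and (b) if $|\Phi_{\lambda_{j}}| \geq \delta_{I,\tau}r^{\tau}/2$, then $|\Phi_{\lambda}|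 \geq \delta_{I,\tau}r^{\tau}/2$ for all $\lambda \in (\lambda_{j} - \varepsilon r^{2\tau}, \lambda_{j} + \varepsilon r^{2\tau}) \cap I$.
   Context: $\Phi_{\lambda}(x,y) := (\pi_{\lambda}(x) - \pi_{\lambda}(y))/d(x,y)$ for $x \neq y$. Transversality of order $\tau$: for every compact $I \subset J$ there is $\delta_{I,\tau} > 0$ with $|\Phi_{\lambda}(x,y)| \leq \delta_{I,\tau}d(x,y)^{\tau} \Rightarrow |\partial_{\lambda}\Phi_{\lambda}(x,y)| \geq \delta_{I,\tau}d(x,y)^{\tau}$ for all $\lambda \in I$, $x,y \in \Omega$; $\delta_{I,\tau}$ in the statement is this constant. Regularity of order $\tau$: for every compact $I \subset J$ and integer $l \geq 0$ there is $C_{I,l,\tau}$ with $|\partial_{\lambda}^{l}\Phi_{\lambda}(x,y)| \leq C_{I,l,\tau}d(x,y)^{-l\tau}$ for all $\lambda \in I$, $x,y$. $\mathcal{L}^1$ is Lebesgue measure; $A \lesssim_{I,\tau} B$ means $A \leq CB$ with $C$ depending only on $I,\tau$ (and the constants of the family). *)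

theory Defs
  imports "HOL-Analysis.Analysis"
begin

definition Phi :: "(real \<Rightarrow> 'a::metric_space \<Rightarrow> real) \<Rightarrow> real \<Rightarrow> 'a \<Rightarrow> 'a \<Rightarrow> real" where
  "Phi \<pi> t x y = (\<pi> t x - \<pi> t y) / dist x y"

definition smooth_in_param :: "real set \<Rightarrow> (real \<Rightarrow> 'a \<Rightarrow> real) \<Rightarrow> 'a set \<Rightarrow> bool" where
  "smooth_in_param J \<pi> \<Omega> \<longleftrightarrow>
     (\<forall>x\<in>\<Omega>. \<forall>n::nat. \<forall>t\<in>J. ((deriv ^^ n) (\<lambda>s. \<pi> s x)) differentiable (at t))"

definition transversal_const ::
  "'a::metric_space set \<Rightarrow> (real \<Rightarrow> 'a \<Rightarrow> real) \<Rightarrow> real \<Rightarrow> real set \<Rightarrow> real \<Rightarrow> bool" where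
  "transversal_const \<Omega> \<pi> \<tau> I \<delta> \<longleftrightarrow> \<delta> > 0 \<and>
     (\<forall>t\<in>I. \<forall>x\<in>\<Omega>. \<forall>y\<in>\<Omega>. x \<noteq> y \<longrightarrow>
        \<bar>Phi \<pi> t x y\<bar> \<le> \<delta> * dist x y powr \<tau> \<longrightarrow>
        \<bar>deriv (\<lambda>s. Phi \<pi> s x y) t\<bar> \<ge> \<delta> * dist x y powr \<tau>)"

definition transversality ::
  "'a::metric_space set \<Rightarrow> real set \<Rightarrow> (real \<Rightarrow> 'a \<Rightarrow> real) \<Rightarrow> real \<Rightarrow> bool" where
  "transversality \<Omega> J \<pi> \<tau> \<longleftrightarrow>
     (\<forall>I. compact I \<and> I \<subseteq> J \<longrightarrow> (\<exists>\<delta>. transversal_const \<Omega> \<pi> \<tau> I \<delta>))"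

definition regularity ::
  "'a::metric_space set \<Rightarrow> real set \<Rightarrow> (real \<Rightarrow> 'a \<Rightarrow> real) \<Rightarrow> real \<Rightarrow> bool" where
  "regularity \<Omega> J \<pi> \<tau> \<longleftrightarrow>
     (\<forall>I. compact I \<and> I \<subseteq> J \<longrightarrow> (\<forall>l::nat. \<exists>C. \<forall>t\<in>I. \<forall>x\<in>\<Omega>. \<forall>y\<in>\<Omega>. x \<noteq> y \<longrightarrow>
        \<bar>(deriv ^^ l) (\<lambda>s. Phi \<pi> s x y) t\<bar> \<le> C * dist x y powr (- real l * \<tau>)))"

end

theory Submission
  imports Defs
begin

text \<open>Fix \<open>x \<noteq> y\<close>, let \<open>f(t) = Phi t x y\<close>, \<open>r = d(x,y)\<close> and \<open>D = \<delta> r\<^sup>\<tau>\<close>.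
  Transversality gives \<open>\<bar>f'\<bar> \<ge> D\<close> wherever \<open>\<bar>f\<bar> \<le> D\<close>, and first-order regularity gives
  \<open>\<bar>f'\<bar> \<le> K r\<^sup>-\<^sup>\<tau>\<close>. By the mean value theorem \<open>f\<close> is thus expanding at rate \<open>D\<close> on the
  closure of each component \<open>I\<^sub>j\<close> of \<open>{\<bar>f\<bar> < D}\<close> and Lipschitz with constant \<open>K r\<^sup>-\<^sup>\<tau>\<close>.
  Expansion bounds the length of \<open>I\<^sub>j\<close> by 2 and makes \<open>\<bar>f\<bar>\<close> grow at rate \<open>D\<close> away from its
  minimizer on \<open>closure I\<^sub>j\<close>. On an interior component \<open>\<bar>f\<bar> = D\<close> at both ends with opposite
  signs, so its length is at least \<open>2D / (K r\<^sup>-\<^sup>\<tau>) \<sim> r\<^sup>2\<^sup>\<tau>\<close>, which also forces finiteness.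
  Finally the Lipschitz bound moves \<open>\<bar>f\<bar>\<close> by at most \<open>D/2\<close> over a distance \<open>\<epsilon> r\<^sup>2\<^sup>\<tau>\<close>
  with \<open>\<epsilon> = \<delta> / (2K)\<close>, which gives (a) and (b).\<close>

lemma open_bounded_interval_eq_Ioo:
  fixes C :: "real set"
  assumes "open C" "is_interval C" "bounded C" "C \<noteq> {}"
  shows "C = {Inf C<..<Sup C}" "Inf C < Sup C"
proof -
  obtain u v where uv: "closure C = {u..v}"
    using assms connected_compact_interval_1 compact_closure connected_imp_connected_closure
      is_interval_connected_1 by metis
  have "C = {u<..<v}"
    using assms uv convex_interior_closure[of C] interior_open is_interval_convex by fastforce
  then show "C = {Inf C<..<Sup C}" "Inf C < Sup C"
    using \<open>C \<noteq> {}\<close> by auto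
qed

lemma
  fixes S :: "real set"
  assumes "open S" "bounded S" "C \<in> components S"
  shows component_eq_Ioo: "C = {Inf C<..<Sup C}"
    and component_Inf_less_Sup: "Inf C < Sup C"
  using open_bounded_interval_eq_Ioo[of C] assms open_components in_components_connected
    in_components_nonempty in_components_subset bounded_subset is_interval_connected_1 by metis+

lemma mem_component_iff:
  fixes S :: "real set"
  assumes "open S" "bounded S" "C \<in> components S"
  shows "t \<in> C \<longleftrightarrow> Inf C < t \<and> t < Sup C"
  by (subst component_eq_Ioo[OF assms]) simp

lemma component_bounds_notin:
  fixes S :: "real set"
  assumes "open S" "bounded S" and C: "C \<in> components S"
  shows "Inf C \<notin> S" "Sup C \<notin> S"
proof -
  note mem = mem_component_iff[OF assms] and less = component_Inf_less_Sup[OF assms]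
  have mid: "(Inf C + Sup C) / 2 \<in> C" using mem less by auto
  have "{Inf C..<Sup C} \<subseteq> C" if "Inf C \<in> S"
  proof (rule components_maximal[OF C])
    show "{Inf C..<Sup C} \<subseteq> S"
      using that mem in_components_subset[OF C] by (force simp: subset_eq)
    show "C \<inter> {Inf C..<Sup C} \<noteq> {}"
      using mid mem by (metis IntI atLeastLessThan_iff empty_iff less_imp_le)
  qed (simp add: is_interval_connected_1[symmetric])
  moreover have "{Inf C<..Sup C} \<subseteq> C" if "Sup C \<in> S"
  proof (rule components_maximal[OF C])
    show "{Inf C<..Sup C} \<subseteq> S"
      using that mem in_components_subset[OF C] by (force simp: subset_eq)
    show "C \<inter> {Inf C<..Sup C} \<noteq> {}"
      using mid mem by (metis IntI greaterThanAtMost_iff empty_iff less_imp_le)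
  qed (simp add: is_interval_connected_1[symmetric])
  ultimately show "Inf C \<notin> S" "Sup C \<notin> S"
    using mem less by fastforce+
qed

lemma components_separated:
  fixes S :: "real set"
  assumes "open S" "bounded S" "C \<in> components S" "C' \<in> components S" "C \<noteq> C'"
  shows "Sup C \<le> Inf C' \<or> Sup C' \<le> Inf C"
proof (rule ccontr)
  assume "\<not> ?thesis"
  then have "(max (Inf C) (Inf C') + min (Sup C) (Sup C')) / 2 \<in> C \<inter> C'"
    using mem_component_iff[OF assms(1,2,3)] mem_component_iff[OF assms(1,2,4)]
      component_Inf_less_Sup[OF assms(1,2,3)] component_Inf_less_Sup[OF assms(1,2,4)]
    by (auto simp: max_def min_def)
  then show False using components_nonoverlap[OF assms(3,4)] assms(5) by blast
qed

lemma component_bounds_within: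
  fixes S :: "real set"
  assumes "open S" "S \<subseteq> {a<..<b}" "C \<in> components S"
  shows "a \<le> Inf C" "Sup C \<le> b"
proof -
  have "C \<subseteq> {a<..<b}" "C \<noteq> {}"
    using assms(2) in_components_subset[OF assms(3)] in_components_nonempty[OF assms(3)] by auto
  then show "a \<le> Inf C" "Sup C \<le> b"
    by (auto intro!: cInf_greatest cSup_least)
qed

lemma
  fixes S :: "real set"
  assumes "open S" "bounded S"
  shows inj_on_Inf_components: "inj_on Inf (components S)"
    and inj_on_Sup_components: "inj_on Sup (components S)"
  using components_separated[OF assms] component_Inf_less_Sup[OF assms]
  by (metis inj_onI order.strict_iff_not)+

text \<open>Left end points of interior components are \<open>L\<close>-separated, and at most one component
  abuts each end of the interval.\<close>
lemma finite_components_if_long: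
  fixes S :: "real set"
  assumes "open S" "S \<subseteq> {a<..<b}" "0 < L"
    and long: "\<And>C. C \<in> components S \<Longrightarrow> a < Inf C \<Longrightarrow> Sup C < b \<Longrightarrow> L \<le> Sup C - Inf C"
  shows "finite (components S)"
proof -
  have bdd: "bounded S"
    by (rule bounded_subset[OF bounded_Ioo assms(2)])
  note less = component_Inf_less_Sup[OF assms(1) bdd] and sep = components_separated[OF assms(1) bdd]
  note bounds = component_bounds_within[OF assms(1,2)]
  define inner where "inner = {C \<in> components S. a < Inf C \<and> Sup C < b}"
  have "uniform_discrete (Inf ` inner)"
    unfolding uniform_discrete_def
  proof (intro exI[of _ L] conjI ballI impI)
    fix s t assume "s \<in> Inf ` inner" "t \<in> Inf ` inner" "dist s t < L"
    then obtain C C' where CC': "C \<in> inner" "C' \<in> inner" "s = Inf C" "t = Inf C'"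
      and close: "\<bar>Inf C - Inf C'\<bar> < L"
      by (auto simp: dist_real_def)
    have "Sup C \<le> Inf C' \<Longrightarrow> False" "Sup C' \<le> Inf C \<Longrightarrow> False"
      using long[of C] long[of C'] CC'(1,2) close unfolding inner_def by auto
    then show "s = t" using sep[of C C'] CC'(1,2) CC'(3,4) unfolding inner_def by blast
  qed (fact assms(3))
  moreover have "Inf ` inner \<subseteq> {a..b}"
  proof (rule image_subsetI)
    fix C assume "C \<in> inner"
    then show "Inf C \<in> {a..b}" using less[of C] bounds(2)[of C] unfolding inner_def by auto
  qed
  then have "bounded (Inf ` inner)"
    by (rule bounded_subset[OF compact_imp_bounded[OF compact_Icc]])
  ultimately have "finite (Inf ` inner \<union> {a})"
    by (metis uniform_discrete_finite_iff finite_insert Un_insert_right sup_bot_right)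
  then have "finite (Inf -` (Inf ` inner \<union> {a}) \<inter> components S \<union> Sup -` {b} \<inter> components S)"
    using finite_vimage_IntI inj_on_Inf_components[OF assms(1) bdd]
      inj_on_Sup_components[OF assms(1) bdd] by blast
  moreover have "components S \<subseteq> Inf -` (Inf ` inner \<union> {a}) \<inter> components S \<union> Sup -` {b} \<inter> components S"
    using bounds unfolding inner_def by fastforce
  ultimately show ?thesis by (rule finite_subset[rotated])
qed

locale transversal_function =
  fixes f f' :: "real \<Rightarrow> real" and a b D K :: real
  assumes has_derivative: "\<And>t. t \<in> {a..b} \<Longrightarrow> (f has_real_derivative f' t) (at t)"
    and derivative_bound: "\<And>t. t \<in> {a..b} \<Longrightarrow> \<bar>f' t\<bar> \<le> K"
    and transversal: "\<And>t. t \<in> {a..b} \<Longrightarrow> \<bar>f t\<bar> \<le> D \<Longrightarrow> D \<le> \<bar>f' t\<bar>"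
    and D_pos: "0 < D" and K_pos: "0 < K"
begin

lemma continuous_on_f: "continuous_on {a..b} f"
  using has_derivative by (meson DERIV_isCont continuous_at_imp_continuous_on)

lemma mean_value_abs:
  assumes "s \<in> {a..b}" "t \<in> {a..b}"
  obtains z where "min s t \<le> z" "z \<le> max s t" "\<bar>f t - f s\<bar> = \<bar>f' z\<bar> * \<bar>t - s\<bar>"
proof -
  have "\<exists>z. s \<le> z \<and> z \<le> t \<and> \<bar>f t - f s\<bar> = \<bar>f' z\<bar> * \<bar>t - s\<bar>"
    if "s \<le> t" "s \<in> {a..b}" "t \<in> {a..b}" for s t
  proof (cases "s = t")
    case False
    then have "s < t" using that by simp
    moreover have "\<And>z. s \<le> z \<Longrightarrow> z \<le> t \<Longrightarrow> (f has_real_derivative f' z) (at z)"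
      using has_derivative that by simp
    ultimately obtain z where "s < z" "z < t" "f t - f s = (t - s) * f' z"
      using MVT2 by blast
    then show ?thesis by (intro exI[of _ z]) (simp add: abs_mult)
  qed auto
  then show thesis
    using that assms by (metis abs_minus_commute max_def min_def nle_le)
qed

lemma lipschitz:
  assumes "s \<in> {a..b}" "t \<in> {a..b}"
  shows "\<bar>f t - f s\<bar> \<le> K * \<bar>t - s\<bar>"
proof -
  obtain z where z: "min s t \<le> z" "z \<le> max s t" "\<bar>f t - f s\<bar> = \<bar>f' z\<bar> * \<bar>t - s\<bar>"
    using mean_value_abs[OF assms] .
  moreover have "z \<in> {a..b}"
    using z(1,2) assms by (auto simp: min_def max_def split: if_splits)
  then have "\<bar>f' z\<bar> \<le> K"
    by (rule derivative_bound)
  ultimately show ?thesis by (simp add: mult_right_mono)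
qed

lemma expanding:
  assumes "s \<in> {a..b}" "t \<in> {a..b}"
    and small: "\<And>u. min s t \<le> u \<Longrightarrow> u \<le> max s t \<Longrightarrow> \<bar>f u\<bar> \<le> D"
  shows "D * \<bar>t - s\<bar> \<le> \<bar>f t - f s\<bar>"
proof -
  obtain z where z: "min s t \<le> z" "z \<le> max s t" "\<bar>f t - f s\<bar> = \<bar>f' z\<bar> * \<bar>t - s\<bar>"
    using mean_value_abs[OF assms(1,2)] .
  moreover have "z \<in> {a..b}"
    using z(1,2) assms(1,2) by (auto simp: min_def max_def split: if_splits)
  then have "D \<le> \<bar>f' z\<bar>"
    using transversal small[OF z(1,2)] by blast
  ultimately show ?thesis by (simp add: mult_right_mono)
qed

abbreviation sublevel :: "real set"
  where "sublevel \<equiv> {t \<in> {a<..<b}. \<bar>f t\<bar> < D}"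

lemma open_sublevel: "open sublevel"
proof -
  have "continuous_on {a<..<b} (\<lambda>t. \<bar>f t\<bar>)"
    by (intro continuous_on_rabs continuous_on_subset[OF continuous_on_f]) auto
  then show ?thesis
    using continuous_open_preimage[of "{a<..<b}" _ "{..<D}"] by (simp add: vimage_def Int_def)
qed

lemma sublevel_subset: "sublevel \<subseteq> {a<..<b}"
  by auto

lemma bounded_sublevel: "bounded sublevel"
  by (rule bounded_subset[OF bounded_Ioo sublevel_subset])

lemma closure_sublevel_subset: "closure sublevel \<subseteq> {t \<in> {a..b}. \<bar>f t\<bar> \<le> D}"
proof (rule closure_minimal)
  have "continuous_on {a..b} (\<lambda>t. \<bar>f t\<bar>)"
    by (intro continuous_on_rabs continuous_on_f)
  then show "closed {t \<in> {a..b}. \<bar>f t\<bar> \<le> D}"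
    using continuous_closed_preimage[of "{a..b}" _ "{..D}"] by (simp add: vimage_def Int_def)
qed auto

context
  fixes C assumes C: "C \<in> components sublevel"
begin

lemma Inf_less_Sup: "Inf C < Sup C"
  by (rule component_Inf_less_Sup[OF open_sublevel bounded_sublevel C])

lemma component_bounds: "a \<le> Inf C" "Sup C \<le> b"
  by (rule component_bounds_within[OF open_sublevel sublevel_subset C])+

lemma component_ends_notin: "Inf C \<notin> sublevel" "Sup C \<notin> sublevel"
  by (rule component_bounds_notin[OF open_sublevel bounded_sublevel C])+

lemma closure_component: "closure C = {Inf C..Sup C}"
  using component_eq_Ioo[OF open_sublevel bounded_sublevel C] Inf_less_Sup
  by (metis closure_greaterThanLessThan)

lemma closure_component_subset: "t \<in> {Inf C..Sup C} \<Longrightarrow> t \<in> {a..b} \<and> \<bar>f t\<bar> \<le> D"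
  using closure_mono[OF in_components_subset[OF C]] closure_sublevel_subset
  unfolding closure_component by blast

lemma measure_component: "measure lborel C = Sup C - Inf C"
  using component_eq_Ioo[OF open_sublevel bounded_sublevel C] Inf_less_Sup
  by (metis measure_lborel_Ioo less_imp_le)

lemma expanding_across_component: "D * (Sup C - Inf C) \<le> \<bar>f (Sup C) - f (Inf C)\<bar>"
  using expanding[of "Inf C" "Sup C"] closure_component_subset Inf_less_Sup by simp

lemma measure_component_le_2: "measure lborel C \<le> 2"
proof -
  have "D * (Sup C - Inf C) \<le> 2 * D"
    using expanding_across_component closure_component_subset[of "Inf C"] closure_component_subset[of "Sup C"]
      Inf_less_Sup by auto
  then show ?thesis unfolding measure_component using D_pos by simp
qed

text \<open>At the ends of an interior component \<open>\<bar>f\<bar> = D\<close>, and expansion forces opposite signs,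
  so \<open>f\<close> travels a distance \<open>2 D\<close> at speed at most \<open>K\<close>.\<close>
lemma measure_interior_component_ge:
  assumes "a \<notin> closure C" "b \<notin> closure C"
  shows "2 * D \<le> K * measure lborel C"
proof -
  have inner: "a < Inf C" "Sup C < b"
    using assms component_bounds Inf_less_Sup unfolding closure_component by auto
  have "\<bar>f (Inf C)\<bar> = D" "\<bar>f (Sup C)\<bar> = D"
    using component_ends_notin closure_component_subset[of "Inf C"] closure_component_subset[of "Sup C"]
      Inf_less_Sup inner by auto
  moreover have "0 < \<bar>f (Sup C) - f (Inf C)\<bar>"
    using expanding_across_component D_pos Inf_less_Sup by (smt (verit) mult_pos_pos)
  ultimately have "\<bar>f (Sup C) - f (Inf C)\<bar> = 2 * D"
    by (auto simp: abs_if split: if_splits)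
  moreover have "\<bar>f (Sup C) - f (Inf C)\<bar> \<le> K * (Sup C - Inf C)"
    using lipschitz[of "Inf C" "Sup C"] closure_component_subset Inf_less_Sup by simp
  ultimately show ?thesis unfolding measure_component by simp
qed

lemma component_contains_neighbourhood:
  assumes "K * e \<le> D / 2" "t \<in> C" "\<bar>f t\<bar> \<le> D / 2"
  shows "{t - e<..<t + e} \<inter> {a<..<b} \<subseteq> C"
proof
  fix s assume s: "s \<in> {t - e<..<t + e} \<inter> {a<..<b}"
  have t: "t \<in> {a<..<b}" using in_components_subset[OF C] assms(2) by auto
  have "{min s t..max s t} \<subseteq> sublevel"
  proof
    fix u assume u: "u \<in> {min s t..max s t}"
    have "\<bar>f u - f t\<bar> \<le> K * \<bar>u - t\<bar>"
      using u s t by (intro lipschitz) (auto simp: min_def max_def split: if_splits)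
    also have "\<dots> < K * e"
      using u s K_pos by (intro mult_strict_left_mono) (auto simp: min_def max_def split: if_splits)
    finally have "\<bar>f u\<bar> < D" using assms(1,3) by linarith
    then show "u \<in> sublevel" using u s t by (auto simp: min_def max_def split: if_splits)
  qed
  then have "{min s t..max s t} \<subseteq> C"
    using assms(2) by (intro components_maximal[OF C]) (auto simp: is_interval_connected_1[symmetric])
  then show "s \<in> C" by auto
qed

lemma component_has_minimizer:
  obtains tj where "tj \<in> closure C" "\<And>t. t \<in> closure C \<Longrightarrow> \<bar>f tj\<bar> \<le> \<bar>f t\<bar>"
proof -
  have "continuous_on {Inf C..Sup C} (\<lambda>t. \<bar>f t\<bar>)"
    using closure_component_subset
    by (intro continuous_on_rabs continuous_on_subset[OF continuous_on_f]) auto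
  then show thesis
    using continuous_attains_inf[of "{Inf C..Sup C}"] Inf_less_Sup that
    unfolding closure_component by fastforce
qed

text \<open>Between a point and a minimizer of \<open>\<bar>f\<bar>\<close>, \<open>f\<close> cannot change sign unless it vanishes
  at the minimizer, so \<open>\<bar>f t - f tj\<bar> \<le> \<bar>f t\<bar>\<close>.\<close>
lemma growth_from_minimizer:
  assumes tj: "tj \<in> closure C" "\<And>t. t \<in> closure C \<Longrightarrow> \<bar>f tj\<bar> \<le> \<bar>f t\<bar>"
    and t: "t \<in> closure C"
  shows "D * \<bar>t - tj\<bar> \<le> \<bar>f t\<bar>"
proof -
  have between: "u \<in> closure C" if "min tj t \<le> u" "u \<le> max tj t" for u
    using that t tj(1) unfolding closure_component by (auto simp: min_def max_def split: if_splits)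
  have "D * \<bar>t - tj\<bar> \<le> \<bar>f t - f tj\<bar>"
    using t tj(1) between closure_component_subset unfolding closure_component
    by (intro expanding) auto
  moreover have "\<bar>f t - f tj\<bar> \<le> \<bar>f t\<bar>"
  proof (cases "f t * f tj < 0")
    case True
    have "continuous_on {min tj t..max tj t} f"
      using between closure_component_subset unfolding closure_component
      by (intro continuous_on_subset[OF continuous_on_f]) auto
    then have "is_interval (f ` {min tj t..max tj t})"
      using connected_continuous_image[OF _ connected_Icc] is_interval_connected_1 by blast
    moreover have "f t \<in> f ` {min tj t..max tj t}" "f tj \<in> f ` {min tj t..max tj t}"
      by auto
    ultimately have "0 \<in> f ` {min tj t..max tj t}"
      using True unfolding is_interval_1 by (metis mult_less_0_iff less_eq_real_def)
    then obtain z where "z \<in> {min tj t..max tj t}" "f z = 0"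
      by auto
    then have "f tj = 0" using tj(2)[of z] between by simp
    then show ?thesis using True by simp
  next
    case False
    then have "0 \<le> f t * f tj" by simp
    then show ?thesis using tj(2)[OF t] by (auto simp: zero_le_mult_iff)
  qed
  ultimately show ?thesis by linarith
qed

lemma large_near_minimizer:
  assumes "K * e \<le> D / 2"
    and tj: "tj \<in> closure C" "\<And>t. t \<in> closure C \<Longrightarrow> \<bar>f tj\<bar> \<le> \<bar>f t\<bar>" "D / 2 \<le> \<bar>f tj\<bar>"
    and t: "t \<in> {tj - e<..<tj + e} \<inter> {a..b}"
  shows "D / 2 \<le> \<bar>f t\<bar>"
proof -
  have near_end: "D / 2 \<le> \<bar>f t\<bar>" if "c \<in> {a<..<b}" "c \<notin> sublevel" "\<bar>t - c\<bar> < e" for c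
  proof -
    have "\<bar>f t - f c\<bar> \<le> K * \<bar>t - c\<bar>" using that t by (intro lipschitz) auto
    also have "\<dots> \<le> K * e" using that K_pos by simp
    finally show ?thesis using that assms(1) by auto
  qed
  consider "t \<in> closure C" | "Sup C < t" | "t < Inf C"
    unfolding closure_component by force
  then show ?thesis
  proof cases
    case 1
    then show ?thesis using tj(2,3) by fastforce
  next
    case 2
    then show ?thesis
      using near_end[of "Sup C"] t tj(1) component_ends_notin(2) component_bounds Inf_less_Sup
      unfolding closure_component by auto
  next
    case 3
    then show ?thesis
      using near_end[of "Inf C"] t tj(1) component_ends_notin(1) component_bounds Inf_less_Sup
      unfolding closure_component by auto
  qed
qed

lemma component_minimizer:
  assumes "K * e \<le> D / 2"
  shows "\<exists>tj\<in>closure C. (\<forall>t\<in>closure C. \<bar>f tj\<bar> \<le> \<bar>f t\<bar> \<and> D * \<bar>t - tj\<bar> \<le> \<bar>f t\<bar>) \<and>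
    (D / 2 \<le> \<bar>f tj\<bar> \<longrightarrow> (\<forall>t\<in>{tj - e<..<tj + e} \<inter> {a..b}. D / 2 \<le> \<bar>f t\<bar>))"
proof -
  obtain tj where tj: "tj \<in> closure C" "\<And>t. t \<in> closure C \<Longrightarrow> \<bar>f tj\<bar> \<le> \<bar>f t\<bar>"
    using component_has_minimizer by blast
  then show ?thesis
    using growth_from_minimizer[OF tj] large_near_minimizer[OF assms tj] by blast
qed

end

lemma finite_components_sublevel: "finite (components sublevel)"
proof (rule finite_components_if_long[OF open_sublevel sublevel_subset])
  show "0 < 2 * D / K" using D_pos K_pos by simp
  fix C assume C: "C \<in> components sublevel" "a < Inf C" "Sup C < b"
  then have "a \<notin> closure C" "b \<notin> closure C"
    using closure_component Inf_less_Sup by auto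
  then show "2 * D / K \<le> Sup C - Inf C"
    using measure_interior_component_ge[OF C(1)] measure_component[OF C(1)] K_pos
    by (simp add: divide_le_eq mult.commute)
qed

text \<open>The one-dimensional form of the theorem; \<open>L\<close> and \<open>c\<close> let the caller rescale the
  lower bound \<open>2 D \<le> K \<cdot> length\<close> for interior components.\<close>
lemma sublevel_components:
  assumes "K * e \<le> D / 2" and lower: "\<And>m. 2 * D \<le> K * m \<Longrightarrow> L \<le> c * m"
  shows "countable (components sublevel) \<and> finite (components sublevel) \<and>
    (\<forall>Ij\<in>components sublevel. open Ij \<and> is_interval Ij \<and> Ij \<subseteq> {a..b} \<and>
       measure lborel Ij \<le> 2 \<and>
       (a \<notin> closure Ij \<and> b \<notin> closure Ij \<longrightarrow> L \<le> c * measure lborel Ij) \<and>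
       (\<forall>t\<in>Ij. \<bar>f t\<bar> \<le> D / 2 \<longrightarrow> {t - e<..<t + e} \<inter> {a<..<b} \<subseteq> Ij) \<and>
       (\<exists>tj\<in>closure Ij.
          (\<forall>t\<in>closure Ij. \<bar>f t\<bar> \<ge> \<bar>f tj\<bar> \<and> \<bar>f t\<bar> \<ge> D * \<bar>t - tj\<bar>) \<and>
          (\<bar>f tj\<bar> \<ge> D / 2 \<longrightarrow> (\<forall>t\<in>{tj - e<..<tj + e} \<inter> {a..b}. \<bar>f t\<bar> \<ge> D / 2))))"
proof (intro conjI countable_finite finite_components_sublevel ballI)
  fix Ij assume Ij: "Ij \<in> components sublevel"
  show "open Ij" using open_components[OF open_sublevel Ij] .
  show "is_interval Ij" using in_components_connected[OF Ij] by (simp add: is_interval_connected_1)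
  show "Ij \<subseteq> {a..b}" using in_components_subset[OF Ij] by auto
  show "measure lborel Ij \<le> 2" using measure_component_le_2[OF Ij] .
  show "a \<notin> closure Ij \<and> b \<notin> closure Ij \<longrightarrow> L \<le> c * measure lborel Ij"
    using measure_interior_component_ge[OF Ij] lower by blast
  show "\<bar>f t\<bar> \<le> D / 2 \<longrightarrow> {t - e<..<t + e} \<inter> {a<..<b} \<subseteq> Ij" if "t \<in> Ij" for t
    using component_contains_neighbourhood[OF Ij assms(1) that] by blast
qed (use component_minimizer[OF _ assms(1)] in blast)

end

lemma Phi_has_real_derivative:
  assumes "smooth_in_param J \<pi> \<Omega>" "x \<in> \<Omega>" "y \<in> \<Omega>" "x \<noteq> y" "t \<in> J"
  shows "((\<lambda>s. Phi \<pi> s x y) has_real_derivative deriv (\<lambda>s. Phi \<pi> s x y) t) (at t)"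
proof -
  have "(\<lambda>s. \<pi> s x) differentiable (at t)" "(\<lambda>s. \<pi> s y) differentiable (at t)"
    using assms unfolding smooth_in_param_def by (metis funpow_0)+
  then have "(\<lambda>s. Phi \<pi> s x y) differentiable (at t)"
    unfolding Phi_def using assms(4) by (intro differentiable_divide differentiable_diff) auto
  then show ?thesis by (simp add: DERIV_deriv_iff_real_differentiable)
qed

lemma regularity_deriv_bound:
  assumes "regularity \<Omega> J \<pi> \<tau>" "{a..b} \<subseteq> J"
  obtains K where "0 < K"
    "\<And>t x y. t \<in> {a..b} \<Longrightarrow> x \<in> \<Omega> \<Longrightarrow> y \<in> \<Omega> \<Longrightarrow> x \<noteq> y \<Longrightarrow>
      \<bar>deriv (\<lambda>s. Phi \<pi> s x y) t\<bar> \<le> K * dist x y powr (- \<tau>)"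
proof -
  obtain C where C: "\<forall>t\<in>{a..b}. \<forall>x\<in>\<Omega>. \<forall>y\<in>\<Omega>. x \<noteq> y \<longrightarrow>
      \<bar>(deriv ^^ 1) (\<lambda>s. Phi \<pi> s x y) t\<bar> \<le> C * dist x y powr (- real 1 * \<tau>)"
    using assms unfolding regularity_def by (meson compact_Icc)
  show thesis
  proof (rule that[of "max C 1"])
    fix t x y assume "t \<in> {a..b}" "x \<in> \<Omega>" "y \<in> \<Omega>" "x \<noteq> y"
    then have "\<bar>deriv (\<lambda>s. Phi \<pi> s x y) t\<bar> \<le> C * dist x y powr (- \<tau>)"
      using C by simp
    also have "\<dots> \<le> max C 1 * dist x y powr (- \<tau>)"
      by (intro mult_right_mono) auto
    finally show "\<bar>deriv (\<lambda>s. Phi \<pi> s x y) t\<bar> \<le> max C 1 * dist x y powr (- \<tau>)" .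
  qed simp
qed

lemma Phi_sublevel_components:
  fixes \<pi> :: "real \<Rightarrow> 'a::metric_space \<Rightarrow> real"
  assumes "smooth_in_param J \<pi> \<Omega>" "{a..b} \<subseteq> J" "transversal_const \<Omega> \<pi> \<tau> {a..b} \<delta>" "0 < K"
    and deriv_bound: "\<And>t x y. t \<in> {a..b} \<Longrightarrow> x \<in> \<Omega> \<Longrightarrow> y \<in> \<Omega> \<Longrightarrow> x \<noteq> y \<Longrightarrow>
      \<bar>deriv (\<lambda>s. Phi \<pi> s x y) t\<bar> \<le> K * dist x y powr (- \<tau>)"
  shows "\<forall>x\<in>\<Omega>. \<forall>y\<in>\<Omega>. x \<noteq> y \<longrightarrow>
    (let r = dist x y;
         S = {t \<in> {a<..<b}. \<bar>Phi \<pi> t x y\<bar> < \<delta> * r powr \<tau>}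
     in countable (components S) \<and> finite (components S) \<and>
        (\<forall>Ij\<in>components S. open Ij \<and> is_interval Ij \<and> Ij \<subseteq> {a..b} \<and>
           measure lborel Ij \<le> 2 \<and>
           (a \<notin> closure Ij \<and> b \<notin> closure Ij \<longrightarrow> r powr (2 * \<tau>) \<le> K / (2 * \<delta>) * measure lborel Ij) \<and>
           (\<forall>t\<in>Ij. \<bar>Phi \<pi> t x y\<bar> \<le> \<delta> * r powr \<tau> / 2 \<longrightarrow>
              {t - \<delta> / (2 * K) * r powr (2 * \<tau>) <..< t + \<delta> / (2 * K) * r powr (2 * \<tau>)} \<inter> {a<..<b} \<subseteq> Ij) \<and>
           (\<exists>tj\<in>closure Ij.
              (\<forall>t\<in>closure Ij. \<bar>Phi \<pi> t x y\<bar> \<ge> \<bar>Phi \<pi> tj x y\<bar> \<and>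
                 \<bar>Phi \<pi> t x y\<bar> \<ge> \<delta> * r powr \<tau> * \<bar>t - tj\<bar>) \<and>
              (\<bar>Phi \<pi> tj x y\<bar> \<ge> \<delta> * r powr \<tau> / 2 \<longrightarrow>
                 (\<forall>t\<in>{tj - \<delta> / (2 * K) * r powr (2 * \<tau>) <..< tj + \<delta> / (2 * K) * r powr (2 * \<tau>)} \<inter> {a..b}.
                    \<bar>Phi \<pi> t x y\<bar> \<ge> \<delta> * r powr \<tau> / 2)))))"
proof (intro ballI impI)
  fix x y assume xy: "x \<in> \<Omega>" "y \<in> \<Omega>" "x \<noteq> y"
  define r where "r = dist x y"
  have r: "0 < r" using xy by (simp add: r_def)
  have \<delta>: "0 < \<delta>" and transversal: "\<And>t. t \<in> {a..b} \<Longrightarrow> \<bar>Phi \<pi> t x y\<bar> \<le> \<delta> * r powr \<tau> \<Longrightarrow>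
      \<delta> * r powr \<tau> \<le> \<bar>deriv (\<lambda>s. Phi \<pi> s x y) t\<bar>"
    using assms(3) xy unfolding transversal_const_def r_def by auto
  interpret transversal_function "\<lambda>s. Phi \<pi> s x y" "deriv (\<lambda>s. Phi \<pi> s x y)" a b
    "\<delta> * r powr \<tau>" "K * r powr (- \<tau>)"
    using Phi_has_real_derivative[OF assms(1) xy] assms(2,4) deriv_bound[OF _ xy] transversal \<delta> r
    unfolding r_def by unfold_locales auto
  have p: "0 < r powr \<tau>" using r by simp
  have neg: "r powr (- \<tau>) = 1 / r powr \<tau>" by (simp add: powr_minus_divide)
  have double: "r powr (2 * \<tau>) = r powr \<tau> * r powr \<tau>" by (simp add: powr_add[symmetric])
  have "K * r powr (- \<tau>) * (\<delta> / (2 * K) * r powr (2 * \<tau>)) \<le> \<delta> * r powr \<tau> / 2"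
    using assms(4) p unfolding neg double by (simp add: field_simps)
  moreover have "r powr (2 * \<tau>) \<le> K / (2 * \<delta>) * m" if "2 * (\<delta> * r powr \<tau>) \<le> K * r powr (- \<tau>) * m" for m
    using that \<delta> p unfolding neg double by (simp add: field_simps)
  ultimately show "(let r = dist x y;
         S = {t \<in> {a<..<b}. \<bar>Phi \<pi> t x y\<bar> < \<delta> * r powr \<tau>}
     in countable (components S) \<and> finite (components S) \<and>
        (\<forall>Ij\<in>components S. open Ij \<and> is_interval Ij \<and> Ij \<subseteq> {a..b} \<and>
           measure lborel Ij \<le> 2 \<and>
           (a \<notin> closure Ij \<and> b \<notin> closure Ij \<longrightarrow> r powr (2 * \<tau>) \<le> K / (2 * \<delta>) * measure lborel Ij) \<and>
           (\<forall>t\<in>Ij. \<bar>Phi \<pi> t x y\<bar> \<le> \<delta> * r powr \<tau> / 2 \<longrightarrow>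
              {t - \<delta> / (2 * K) * r powr (2 * \<tau>) <..< t + \<delta> / (2 * K) * r powr (2 * \<tau>)} \<inter> {a<..<b} \<subseteq> Ij) \<and>
           (\<exists>tj\<in>closure Ij.
              (\<forall>t\<in>closure Ij. \<bar>Phi \<pi> t x y\<bar> \<ge> \<bar>Phi \<pi> tj x y\<bar> \<and>
                 \<bar>Phi \<pi> t x y\<bar> \<ge> \<delta> * r powr \<tau> * \<bar>t - tj\<bar>) \<and>
              (\<bar>Phi \<pi> tj x y\<bar> \<ge> \<delta> * r powr \<tau> / 2 \<longrightarrow>
                 (\<forall>t\<in>{tj - \<delta> / (2 * K) * r powr (2 * \<tau>) <..< tj + \<delta> / (2 * K) * r powr (2 * \<tau>)} \<inter> {a..b}.
                    \<bar>Phi \<pi> t x y\<bar> \<ge> \<delta> * r powr \<tau> / 2)))))"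
    unfolding Let_def r_def[symmetric] by (rule sublevel_components)
qed

theorem lemmaA1:
  fixes \<Omega> :: "'a::metric_space set"
    and J :: "real set"
    and \<pi> :: "real \<Rightarrow> 'a \<Rightarrow> real"
    and \<tau> a b \<delta> :: real
  assumes "compact \<Omega>"
    and "open J" and "is_interval J"
    and "\<forall>t\<in>J. continuous_on \<Omega> (\<pi> t)"
    and "smooth_in_param J \<pi> \<Omega>"
    and "0 \<le> \<tau>" and "\<tau> < 1"
    and "transversality \<Omega> J \<pi> \<tau>"
    and "regularity \<Omega> J \<pi> \<tau>"
    and "a \<le> b" and "{a..b} \<subseteq> J"
    and "transversal_const \<Omega> \<pi> \<tau> {a..b} \<delta>"
  shows "\<exists>C>0. \<exists>\<epsilon>>0. \<forall>x\<in>\<Omega>. \<forall>y\<in>\<Omega>. x \<noteq> y \<longrightarrow>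
    (let r = dist x y;
         S = {t \<in> {a<..<b}. \<bar>Phi \<pi> t x y\<bar> < \<delta> * r powr \<tau>}
     in countable (components S) \<and> finite (components S) \<and>
        (\<forall>Ij\<in>components S. open Ij \<and> is_interval Ij \<and> Ij \<subseteq> {a..b} \<and>
           measure lborel Ij \<le> 2 \<and>
           (a \<notin> closure Ij \<and> b \<notin> closure Ij \<longrightarrow> r powr (2 * \<tau>) \<le> C * measure lborel Ij) \<and>
           (\<forall>t\<in>Ij. \<bar>Phi \<pi> t x y\<bar> \<le> \<delta> * r powr \<tau> / 2 \<longrightarrow>
              {t - \<epsilon> * r powr (2 * \<tau>) <..< t + \<epsilon> * r powr (2 * \<tau>)} \<inter> {a<..<b} \<subseteq> Ij) \<and>
           (\<exists>tj\<in>closure Ij.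
              (\<forall>t\<in>closure Ij. \<bar>Phi \<pi> t x y\<bar> \<ge> \<bar>Phi \<pi> tj x y\<bar> \<and>
                 \<bar>Phi \<pi> t x y\<bar> \<ge> \<delta> * r powr \<tau> * \<bar>t - tj\<bar>) \<and>
              (\<bar>Phi \<pi> tj x y\<bar> \<ge> \<delta> * r powr \<tau> / 2 \<longrightarrow>
                 (\<forall>t\<in>{tj - \<epsilon> * r powr (2 * \<tau>) <..< tj + \<epsilon> * r powr (2 * \<tau>)} \<inter> {a..b}.
                    \<bar>Phi \<pi> t x y\<bar> \<ge> \<delta> * r powr \<tau> / 2)))))"
proof -
  obtain K where K: "0 < K" and deriv_bound: "\<And>t x y. t \<in> {a..b} \<Longrightarrow> x \<in> \<Omega> \<Longrightarrow> y \<in> \<Omega> \<Longrightarrow>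
      x \<noteq> y \<Longrightarrow> \<bar>deriv (\<lambda>s. Phi \<pi> s x y) t\<bar> \<le> K * dist x y powr (- \<tau>)"
    using regularity_deriv_bound[OF assms(9,11)] by blast
  have "0 < \<delta>" using assms(12) unfolding transversal_const_def by simp
  then have "0 < K / (2 * \<delta>)" "0 < \<delta> / (2 * K)" using K by simp_all
  with Phi_sublevel_components[OF assms(5,11,12) K deriv_bound] show ?thesis by blast
qed

end
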